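(* Assume $\sum_{j=1}^\infty\beta_j^2<\infty$ and $|\rho|<1$. Then the limits $\kappa_i=\lim_{p\to\infty}\kappa_{i,p}$ satisfy (i) $\kappa_1=\beta(1)+2b_1(\rho)$; (ii) $\kappa_2=\beta(1)\frac{1+\rho^2}{1-\rho^2}-\beta(\rho^2)\frac{1}{1-\rho^2}+2\Big(b_1^{(1)}(\rho)+b_1(\rho)\frac{1+\rho^2}{1-\rho^2}-b_2(\rho)\frac{1}{1-\rho^2}\Big)$; (iii) $\kappa_3=\frac{1}{(1-\rho^2)^2}\big((1+4\rho^2+\rho^4)(\beta(1)+2b_1(\rho))-(1+3\rho^2)(\beta(\rho^2)+2b_2(\rho))\big)+\frac{1}{1-\rho^2}\big(3b_1^{(1)}(\rho)(1+\rho^2)-2(b_2^{(1)}(\rho)+\beta^{(1)}(\rho^2))\big)+b^{(2)}(\rho)$.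
   Context: $\kappa_{1,p}=\sum_{k,l=1}^p\beta_k\beta_l\rho^{|k-l|}$, $\kappa_{2,p}=\sum_{k=1}^p\big(\sum_{l=1}^p\beta_l\rho^{|k-l|}\big)^2$, $\kappa_{3,p}=\sum_{k,l,j,j'=1}^p\beta_j\beta_{j'}\rho^{|k-j|}\rho^{|l-j'|}\rho^{|k-l|}$. For $|x|\le1$: $\beta(x)=\sum_{j\ge1}\beta_j^2x^j$, $\beta^{(1)}(x)=\sum_{j\ge1}j\beta_j^2x^j$, $b_1(x)=\sum_{j'\ge2}\sum_{j=1}^{j'-1}\beta_j\beta_{j'}x^{j'-j}$, $b_2(x)=\sum_{j'\ge2}\sum_{j=1}^{j'-1}\beta_j\beta_{j'}x^{j'+j}$, $b_1^{(1)}(x)=\sum_{j'\ge2}\sum_{j=1}^{j'-1}\beta_j\beta_{j'}x^{j'-j}(j'-j)$, $b_2^{(1)}(x)=\sum_{j'\ge2}\sum_{j=1}^{j'-1}\beta_j\beta_{j'}x^{j'+j}(j'+j)$, $b^{(2)}(x)=\sum_{j'\ge2}\sum_{j=1}^{j'-1}\beta_j\beta_{j'}x^{j'-j}(j'-j)^2$. *)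

theory Defs
  imports "HOL-Analysis.Analysis"
begin

text \<open>Coefficients are a sequence beta :: nat => real; only indices j >= 1 are used.
  ad k l is the absolute difference |k - l| of natural numbers.\<close>

definition ad :: "nat \<Rightarrow> nat \<Rightarrow> nat" where
  "ad k l = (if k \<le> l then l - k else k - l)"

definition kappa1 :: "(nat \<Rightarrow> real) \<Rightarrow> real \<Rightarrow> nat \<Rightarrow> real" where
  "kappa1 b r p = (\<Sum>k=1..p. \<Sum>l=1..p. b k * b l * r ^ ad k l)"

definition kappa2 :: "(nat \<Rightarrow> real) \<Rightarrow> real \<Rightarrow> nat \<Rightarrow> real" where
  "kappa2 b r p = (\<Sum>k=1..p. (\<Sum>l=1..p. b l * r ^ ad k l)^2)"

definition kappa3 :: "(nat \<Rightarrow> real) \<Rightarrow> real \<Rightarrow> nat \<Rightarrow> real" where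
  "kappa3 b r p = (\<Sum>k=1..p. \<Sum>l=1..p. \<Sum>j=1..p. \<Sum>j'=1..p.
      b j * b j' * r ^ ad k j * r ^ ad l j' * r ^ ad k l)"

definition betaf :: "(nat \<Rightarrow> real) \<Rightarrow> real \<Rightarrow> real" where
  "betaf b x = (\<Sum>j. b (Suc j)^2 * x ^ Suc j)"

definition betaf1 :: "(nat \<Rightarrow> real) \<Rightarrow> real \<Rightarrow> real" where
  "betaf1 b x = (\<Sum>j. real (Suc j) * b (Suc j)^2 * x ^ Suc j)"

text \<open>Double series sum_{j'>=2} sum_{j=1}^{j'-1}; for j' < 2 the inner sum is empty.\<close>
definition b1 :: "(nat \<Rightarrow> real) \<Rightarrow> real \<Rightarrow> real" where
  "b1 b x = (\<Sum>j'. \<Sum>j\<in>{1..<j'}. b j * b j' * x ^ (j' - j))"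

definition b2 :: "(nat \<Rightarrow> real) \<Rightarrow> real \<Rightarrow> real" where
  "b2 b x = (\<Sum>j'. \<Sum>j\<in>{1..<j'}. b j * b j' * x ^ (j' + j))"

definition b1d :: "(nat \<Rightarrow> real) \<Rightarrow> real \<Rightarrow> real" where
  "b1d b x = (\<Sum>j'. \<Sum>j\<in>{1..<j'}. b j * b j' * x ^ (j' - j) * real (j' - j))"

definition b2d :: "(nat \<Rightarrow> real) \<Rightarrow> real \<Rightarrow> real" where
  "b2d b x = (\<Sum>j'. \<Sum>j\<in>{1..<j'}. b j * b j' * x ^ (j' + j) * real (j' + j))"

definition bdd2 :: "(nat \<Rightarrow> real) \<Rightarrow> real \<Rightarrow> real" where
  "bdd2 b x = (\<Sum>j'. \<Sum>j\<in>{1..<j'}. b j * b j' * x ^ (j' - j) * real (j' - j)^2)"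

end

(*
  Each kappa_{i,p} is a quadratic form  sum_{j,j' <= p} beta_j beta_j' K_p(j,j')  in beta, whose
  kernel K_p is built from the correlations rho^|k-l|.  As p -> oo the kernel K_p(j,j') converges
  to an explicit kernel L(j,j'), and |K_p(j,j')| <= w(|j-j'|) for a summable w independent of p.
  Since sum beta_j^2 < oo, Young's inequality makes  sum_{j<j'} |beta_j beta_j'| w(j'-j)  finite,
  and Tannery's theorem (dominated convergence for series) gives
      kappa_i = sum_j' ( beta_j'^2 L(j',j') + 2 sum_{j<j'} beta_j beta_j' L(j,j') ).
  Summing the geometric-type series that define L shows that L is a linear combination of the
  kernels rho^d, d rho^d, d^2 rho^d, rho^(j+j') and (j+j') rho^(j+j')  (d = |j-j'|), whose
  quadratic series are  beta(1) + 2 b_1(rho),  2 b_1^(1)(rho),  2 b^(2)(rho),  beta(rho^2) + 2 b_2(rho)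
  and  2 beta^(1)(rho^2) + 2 b_2^(1)(rho).
*)
theory Submission
  imports Defs
begin

lemma ad_sym: "ad k l = ad l k"
  by (simp add: ad_def)

lemma ad_Suc_Suc [simp]: "ad (Suc k) (Suc l) = ad k l"
  by (simp add: ad_def)

lemma ad_0_right [simp]: "ad k 0 = k" and ad_0_left [simp]: "ad 0 l = l"
  by (auto simp: ad_def)

lemma ad_self [simp]: "ad k k = 0"
  by (simp add: ad_def)

lemma ad_eq_diff: "k \<le> l \<Longrightarrow> ad k l = l - k"
  by (simp add: ad_def)

lemma power_add_self: "x ^ (n + n) = (x^2) ^ n" for x :: "'a::monoid_mult"
  by (simp only: mult_2[symmetric] power_mult)

lemma one_minus_square_neq_0: "\<bar>r\<bar> < 1 \<Longrightarrow> 1 - r^2 \<noteq> (0::real)"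
  by (simp add: abs_square_less_1 less_imp_neq)

lemma summable_real_power_mult_geometric:
  fixes x :: real
  assumes "\<bar>x\<bar> < 1"
  shows "summable (\<lambda>n. real n ^ k * x ^ n)"
  using assms
proof (induction k arbitrary: x)
  case 0
  then show ?case using summable_geometric[of x] by simp
next
  case (Suc k)
  have "summable (\<lambda>n. diffs (\<lambda>n. real n ^ k) n * \<bar>x\<bar> ^ n)"
    using Suc by (intro termdiff_converges[of "\<bar>x\<bar>" 1]) auto
  then show ?case
    by (rule summable_comparison_test')
       (auto simp: diffs_def abs_mult power_abs intro!: mult_right_mono mult_mono power_mono)
qed

lemma real_mult_power_le:
  fixes y :: real
  assumes "0 \<le> y" "y < 1"
  shows "real n * y ^ n \<le> 1 / (1 - y)"
proof -
  have "real n * y ^ n = (\<Sum>i<n. y ^ n)" by simp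
  also have "\<dots> \<le> (\<Sum>i<n. y ^ i)" using assms by (intro sum_mono power_decreasing) auto
  also have "\<dots> \<le> (\<Sum>i. y ^ i)" using assms by (intro sum_le_suminf summable_geometric) auto
  also have "\<dots> = 1 / (1 - y)" using suminf_geometric[of y] assms by simp
  finally show ?thesis .
qed

lemma sum_reindex_le_suminf:
  fixes w :: "nat \<Rightarrow> real"
  assumes "summable w" "\<And>d. 0 \<le> w d" "finite A" "inj_on f A"
  shows "(\<Sum>x\<in>A. w (f x)) \<le> suminf w"
proof -
  have "(\<Sum>x\<in>A. w (f x)) = sum w (f ` A)" using assms(4) by (simp add: sum.reindex)
  also have "\<dots> \<le> suminf w" using assms by (intro sum_le_suminf) auto
  finally show ?thesis .
qed

lemma summable_cross_products:
  fixes a w :: "nat \<Rightarrow> real"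
  assumes sa: "summable (\<lambda>j. a j ^ 2)" and sw: "summable w" and w0: "\<And>d. 0 \<le> w d"
  shows "summable (\<lambda>j'. \<Sum>j<j'. \<bar>a j\<bar> * \<bar>a j'\<bar> * w (j' - j))"
proof (rule bounded_imp_summable)
  define A where "A = (\<Sum>j. a j ^ 2)"
  define W where "W = suminf w"
  have A_ge: "(\<Sum>j\<in>J. a j ^ 2) \<le> A" if "finite J" for J
    unfolding A_def using sa that by (intro sum_le_suminf) auto
  have W_ge: "(\<Sum>x\<in>J. w (f x)) \<le> W" if "finite J" "inj_on f J" for J and f :: "nat \<Rightarrow> nat"
    unfolding W_def using that by (intro sum_reindex_le_suminf sw w0)
  have "0 \<le> W" using W_ge[of "{}"] by simp
  show "0 \<le> (\<Sum>j<j'. \<bar>a j\<bar> * \<bar>a j'\<bar> * w (j' - j))" for j'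
    by (intro sum_nonneg mult_nonneg_nonneg w0) auto
  fix n
  \<comment> \<open>Young's inequality \<open>\<bar>x y\<bar> \<le> (x\<^sup>2 + y\<^sup>2)/2\<close> splits the sum into two sums, each bounded by \<open>A W / 2\<close>.\<close>
  have young: "\<bar>x\<bar> * \<bar>y\<bar> \<le> x\<^sup>2 / 2 + y\<^sup>2 / 2" for x y :: real
    using sum_squares_bound[of "\<bar>x\<bar>" "\<bar>y\<bar>"] by (simp add: power2_eq_square)
  have "(\<Sum>j'\<le>n. \<Sum>j<j'. \<bar>a j\<bar> * \<bar>a j'\<bar> * w (j' - j))
      \<le> (\<Sum>j'\<le>n. \<Sum>j<j'. a j ^ 2 / 2 * w (j' - j) + a j' ^ 2 / 2 * w (j' - j))"
    by (intro sum_mono) (metis distrib_right w0 young mult_right_mono)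
  also have "\<dots> = (\<Sum>j<n. a j ^ 2 / 2 * (\<Sum>j'\<in>{Suc j..n}. w (j' - j)))
                  + (\<Sum>j'\<le>n. a j' ^ 2 / 2 * (\<Sum>j<j'. w (j' - j)))"
    by (simp add: sum.distrib sum_distrib_left sum.nested_swap')
  also have "\<dots> \<le> (\<Sum>j<n. a j ^ 2 / 2 * W) + (\<Sum>j'\<le>n. a j' ^ 2 / 2 * W)"
    by (intro add_mono sum_mono mult_left_mono W_ge) (auto simp: inj_on_def)
  also have "\<dots> \<le> A * W / 2 + A * W / 2"
    using A_ge[of "{..<n}"] A_ge[of "{..n}"] \<open>0 \<le> W\<close>
    by (intro add_mono) (auto simp: sum_distrib_right[symmetric] sum_divide_distrib[symmetric] mult_right_mono)
  finally show "(\<Sum>j'\<le>n. \<Sum>j<j'. \<bar>a j\<bar> * \<bar>a j'\<bar> * w (j' - j)) \<le> A * W / 2 + A * W / 2" .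
qed

lemma sum_square_symmetric:
  fixes G :: "nat \<Rightarrow> nat \<Rightarrow> real"
  assumes sym: "\<And>j j'. G j j' = G j' j"
  shows "(\<Sum>j=1..p. \<Sum>j'=1..p. G j j') = (\<Sum>j'=1..p. G j' j' + 2 * (\<Sum>j\<in>{1..<j'}. G j j'))"
proof (induction p)
  case (Suc p)
  have I: "{1..Suc p} = insert (Suc p) {1..p}" by auto
  have "(\<Sum>j=1..Suc p. \<Sum>j'=1..Suc p. G j j')
        = G (Suc p) (Suc p) + (\<Sum>j=1..p. G j (Suc p)) + (\<Sum>j'=1..p. G (Suc p) j')
          + (\<Sum>j=1..p. \<Sum>j'=1..p. G j j')"
    unfolding I by (simp add: sum.distrib)
  also have "(\<Sum>j'=1..p. G (Suc p) j') = (\<Sum>j=1..p. G j (Suc p))"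
    using sym by simp
  finally show ?case
    unfolding Suc.IH by (simp add: I atLeastLessThanSuc_atLeastAtMost)
qed simp

section \<open>Quadratic series of dominated kernels\<close>

text \<open>Only the entries with \<open>j \<le> j'\<close> are constrained: \<open>quad_series\<close> never looks below the diagonal.\<close>

definition dominated_by :: "(nat \<Rightarrow> nat \<Rightarrow> real) \<Rightarrow> (nat \<Rightarrow> real) \<Rightarrow> bool" where
  "dominated_by K w \<longleftrightarrow> summable w \<and> (\<forall>d. 0 \<le> w d) \<and>
     (\<forall>j j'. 1 \<le> j \<longrightarrow> j \<le> j' \<longrightarrow> \<bar>K j j'\<bar> \<le> w (j' - j))"

lemma dominated_byI:
  assumes "summable w" "\<And>d. 0 \<le> w d" "\<And>j j'. 1 \<le> j \<Longrightarrow> j \<le> j' \<Longrightarrow> \<bar>K j j'\<bar> \<le> w (j' - j)"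
  shows "dominated_by K w"
  using assms by (simp add: dominated_by_def)

lemma dominated_byD:
  assumes "dominated_by K w"
  shows "summable w" "0 \<le> w d" "1 \<le> j \<Longrightarrow> j \<le> j' \<Longrightarrow> \<bar>K j j'\<bar> \<le> w (j' - j)"
  using assms by (auto simp: dominated_by_def)

lemma dominated_by_add:
  assumes "dominated_by K w" "dominated_by K' w'"
  shows "dominated_by (\<lambda>j j'. K j j' + K' j j') (\<lambda>d. w d + w' d)"
  using dominated_byD[OF assms(1)] dominated_byD[OF assms(2)]
  by (intro dominated_byI summable_add add_nonneg_nonneg) (auto intro!: order_trans[OF abs_triangle_ineq] add_mono)

lemma dominated_by_scale:
  assumes "dominated_by K w"
  shows "dominated_by (\<lambda>j j'. c * K j j') (\<lambda>d. \<bar>c\<bar> * w d)"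
  using dominated_byD[OF assms]
  by (intro dominated_byI summable_mult) (auto simp: abs_mult intro: mult_left_mono)

lemma dominated_by_limit:
  assumes lim: "\<And>j j'. 1 \<le> j \<Longrightarrow> j \<le> j' \<Longrightarrow> (\<lambda>p. K p j j') \<longlonglongrightarrow> L j j'"
    and dom: "\<And>p. dominated_by (K p) w"
  shows "dominated_by L w"
proof (intro dominated_byI)
  show "summable w" "0 \<le> w d" for d using dominated_byD[OF dom] by auto
  fix j j' :: nat assume "1 \<le> j" "j \<le> j'"
  then show "\<bar>L j j'\<bar> \<le> w (j' - j)"
    using tendsto_le[OF _ tendsto_const tendsto_rabs[OF lim]] dominated_byD(3)[OF dom]
    by (simp add: always_eventually)
qed

definition dominated :: "(nat \<Rightarrow> nat \<Rightarrow> real) \<Rightarrow> bool" where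
  "dominated K \<longleftrightarrow> (\<exists>w. dominated_by K w)"

lemma dominatedI: "dominated_by K w \<Longrightarrow> dominated K"
  unfolding dominated_def by blast

lemma dominated_add:
  "dominated K \<Longrightarrow> dominated K' \<Longrightarrow> dominated (\<lambda>j j'. K j j' + K' j j')"
  unfolding dominated_def using dominated_by_add by blast

lemma dominated_scale: "dominated K \<Longrightarrow> dominated (\<lambda>j j'. c * K j j')"
  unfolding dominated_def using dominated_by_scale by blast

lemma dominated_diff:
  assumes "dominated K" "dominated K'"
  shows "dominated (\<lambda>j j'. K j j' - K' j j')"
  using dominated_add[OF assms(1) dominated_scale[OF assms(2), of "-1"]] by simp

definition quad_series :: "(nat \<Rightarrow> real) \<Rightarrow> (nat \<Rightarrow> nat \<Rightarrow> real) \<Rightarrow> real" where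
  "quad_series b K = (\<Sum>n. b (Suc n)^2 * K (Suc n) (Suc n))
                     + 2 * (\<Sum>j'. \<Sum>j\<in>{1..<j'}. b j * b j' * K j j')"

lemma summable_quad_diag:
  assumes sb: "summable (\<lambda>j. b (Suc j)^2)" and dom: "dominated_by K w"
  shows "summable (\<lambda>n. b (Suc n)^2 * K (Suc n) (Suc n))"
proof (rule summable_comparison_test'[OF summable_mult2[OF sb, of "w 0"]])
  show "norm (b (Suc n)^2 * K (Suc n) (Suc n)) \<le> b (Suc n)^2 * w 0" for n
    using dominated_byD(3)[OF dom, of "Suc n" "Suc n"] by (simp add: abs_mult mult_left_mono)
qed

lemma summable_quad_offdiag:
  assumes sb: "summable (\<lambda>j. b (Suc j)^2)" and dom: "dominated_by K w"
  shows "summable (\<lambda>j'. \<Sum>j\<in>{1..<j'}. b j * b j' * K j j')"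
proof -
  define a where "a = b(0 := 0)"
  have "summable (\<lambda>j. a (Suc j)^2)" using sb by (simp add: a_def)
  then have "summable (\<lambda>j. a j^2)" by (subst (asm) summable_Suc_iff)
  then have S: "summable (\<lambda>j'. \<Sum>j<j'. \<bar>a j\<bar> * \<bar>a j'\<bar> * w (j' - j))"
    using dominated_byD[OF dom] by (intro summable_cross_products)
  show ?thesis
  proof (rule summable_comparison_test'[OF S])
    fix j'
    have "norm (\<Sum>j\<in>{1..<j'}. b j * b j' * K j j') \<le> (\<Sum>j\<in>{1..<j'}. \<bar>a j\<bar> * \<bar>a j'\<bar> * w (j' - j))"
      unfolding real_norm_def using dominated_byD(3)[OF dom]
      by (intro order_trans[OF sum_abs] sum_mono) (auto simp: a_def abs_mult intro!: mult_left_mono)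
    also have "\<dots> \<le> (\<Sum>j<j'. \<bar>a j\<bar> * \<bar>a j'\<bar> * w (j' - j))"
      using dominated_byD(2)[OF dom] by (intro sum_mono2) auto
    finally show "norm (\<Sum>j\<in>{1..<j'}. b j * b j' * K j j') \<le> \<dots>" .
  qed
qed

lemma quad_series_add:
  assumes "summable (\<lambda>j. b (Suc j)^2)" "dominated K" "dominated K'"
  shows "quad_series b (\<lambda>j j'. K j j' + K' j j') = quad_series b K + quad_series b K'"
proof -
  obtain w w' where "dominated_by K w" "dominated_by K' w'"
    using assms(2,3) unfolding dominated_def by blast
  then show ?thesis
    using summable_quad_diag[OF assms(1)] summable_quad_offdiag[OF assms(1)]
    by (simp add: quad_series_def distrib_left sum.distrib suminf_add[symmetric])
qed

lemma quad_series_scale: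
  assumes sb: "summable (\<lambda>j. b (Suc j)^2)" and "dominated K"
  shows "quad_series b (\<lambda>j j'. c * K j j') = c * quad_series b K"
proof -
  obtain w where dom: "dominated_by K w" using assms(2) unfolding dominated_def by blast
  have "(\<Sum>n. b (Suc n)^2 * (c * K (Suc n) (Suc n))) = c * (\<Sum>n. b (Suc n)^2 * K (Suc n) (Suc n))"
    using suminf_mult[OF summable_quad_diag[OF sb dom], of c] by (simp add: mult_ac)
  moreover have "(\<Sum>j'. \<Sum>j\<in>{1..<j'}. b j * b j' * (c * K j j'))
                 = c * (\<Sum>j'. \<Sum>j\<in>{1..<j'}. b j * b j' * K j j')"
    using suminf_mult[OF summable_quad_offdiag[OF sb dom], of c] by (simp add: sum_distrib_left mult_ac)
  ultimately show ?thesis by (simp add: quad_series_def algebra_simps)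
qed

lemma quad_series_diff:
  assumes "summable (\<lambda>j. b (Suc j)^2)" "dominated K" "dominated K'"
  shows "quad_series b (\<lambda>j j'. K j j' - K' j j') = quad_series b K - quad_series b K'"
  using quad_series_add[OF assms(1,2) dominated_scale[OF assms(3)], of "-1"]
    quad_series_scale[OF assms(1,3), of "-1"]
  by simp

definition quad_term :: "(nat \<Rightarrow> real) \<Rightarrow> (nat \<Rightarrow> nat \<Rightarrow> real) \<Rightarrow> nat \<Rightarrow> real" where
  "quad_term b K j' = (if j' = 0 then 0 else b j'^2 * K j' j') + 2 * (\<Sum>j\<in>{1..<j'}. b j * b j' * K j j')"

lemma quad_term_sums:
  assumes sb: "summable (\<lambda>j. b (Suc j)^2)" and dom: "dominated_by K w"
  shows "quad_term b K sums quad_series b K"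
proof -
  have "(\<lambda>j'. if j' = 0 then 0 else b j'^2 * K j' j') sums (\<Sum>n. b (Suc n)^2 * K (Suc n) (Suc n))"
    using summable_sums[OF summable_quad_diag[OF assms]]
      sums_Suc_iff[of "\<lambda>j'. if j' = 0 then 0 else b j'^2 * K j' j'"] by simp
  then show ?thesis
    unfolding quad_series_def quad_term_def[abs_def]
    by (intro sums_add sums_mult summable_sums summable_quad_offdiag[OF assms])
qed

lemma abs_quad_term_le:
  assumes dom: "dominated_by K w"
  shows "\<bar>quad_term b K j'\<bar> \<le> quad_term (\<lambda>j. \<bar>b j\<bar>) (\<lambda>j j'. w (j' - j)) j'"
proof -
  have "\<bar>\<Sum>j\<in>{1..<j'}. b j * b j' * K j j'\<bar> \<le> (\<Sum>j\<in>{1..<j'}. \<bar>b j\<bar> * \<bar>b j'\<bar> * w (j' - j))"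
    using dominated_byD(3)[OF dom]
    by (intro order_trans[OF sum_abs] sum_mono) (auto simp: abs_mult intro!: mult_left_mono)
  moreover have "\<bar>if j' = 0 then 0 else b j'^2 * K j' j'\<bar> \<le> (if j' = 0 then 0 else \<bar>b j'\<bar>^2 * w 0)"
    using dominated_byD(3)[OF dom, of j' j'] by (auto simp: abs_mult intro: mult_left_mono)
  ultimately show ?thesis
    unfolding quad_term_def by (auto intro!: order_trans[OF abs_triangle_ineq])
qed

lemma sum_quad_term:
  assumes "\<And>j j'. K j j' = K j' j"
  shows "(\<Sum>j'=1..p. quad_term b K j') = (\<Sum>j=1..p. \<Sum>j'=1..p. b j * b j' * K j j')"
  unfolding quad_term_def using assms
  by (subst sum_square_symmetric) (auto simp: power2_eq_square mult_ac)

lemma quadratic_form_tendsto: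
  fixes b :: "nat \<Rightarrow> real" and K :: "nat \<Rightarrow> nat \<Rightarrow> nat \<Rightarrow> real"
  assumes sb: "summable (\<lambda>j. b (Suc j)^2)"
    and sym: "\<And>p j j'. K p j j' = K p j' j"
    and lim: "\<And>j j'. 1 \<le> j \<Longrightarrow> j \<le> j' \<Longrightarrow> (\<lambda>p. K p j j') \<longlonglongrightarrow> L j j'"
    and dom: "\<And>p. dominated_by (K p) w"
  shows "(\<lambda>p. \<Sum>j=1..p. \<Sum>j'=1..p. b j * b j' * K p j j') \<longlonglongrightarrow> quad_series b L"
proof -
  define a where "a j' p = (if j' \<le> p then quad_term b (K p) j' else 0)" for j' p
  define M where "M = quad_term (\<lambda>j. \<bar>b j\<bar>) (\<lambda>j j'. w (j' - j))"
  have "(\<lambda>p. a j' p) \<longlonglongrightarrow> quad_term b L j'" for j'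
  proof (rule Lim_transform_eventually)
    show "(\<lambda>p. quad_term b (K p) j') \<longlonglongrightarrow> quad_term b L j'"
      unfolding quad_term_def using lim by (auto intro!: tendsto_intros)
    show "\<forall>\<^sub>F p in sequentially. quad_term b (K p) j' = a j' p"
      unfolding a_def using eventually_ge_at_top[of j'] by eventually_elim simp
  qed
  moreover have "norm (a j' p) \<le> M j'" for j' p
    using abs_quad_term_le[OF dom[of p], of b j'] unfolding a_def M_def
    by (auto intro: order_trans[OF abs_ge_zero])
  moreover have "summable M"
  proof -
    have "dominated_by (\<lambda>j j'. w (j' - j)) w"
      using dominated_byD[OF dom] by (intro dominated_byI) auto
    then show ?thesis
      unfolding M_def using quad_term_sums[of "\<lambda>j. \<bar>b j\<bar>"] sb by (simp add: sums_iff)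
  qed
  ultimately have "(\<lambda>p. \<Sum>j'. a j' p) \<longlonglongrightarrow> (\<Sum>j'. quad_term b L j')"
    using tannerys_theorem[of a "quad_term b L" sequentially M] by (auto intro: always_eventually)
  moreover have "(\<Sum>j'. a j' p) = (\<Sum>j=1..p. \<Sum>j'=1..p. b j * b j' * K p j j')" for p
    using sum_quad_term[where K = "K p" and b = b and p = p] sym
    by (subst suminf_finite[of "{1..p}"]) (auto simp: a_def quad_term_def not_le)
  moreover have "(\<Sum>j'. quad_term b L j') = quad_series b L"
    using quad_term_sums[OF sb dominated_by_limit[OF lim dom]] by (simp add: sums_iff)
  ultimately show ?thesis by simp
qed

section \<open>The basic kernels\<close>

lemma dominated_by_dist_power:
  fixes r :: real
  assumes "\<bar>r\<bar> < 1"
  shows "dominated_by (\<lambda>j j'. real (ad j j') ^ k * r ^ ad j j') (\<lambda>d. real d ^ k * \<bar>r\<bar> ^ d)"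
  using assms by (intro dominated_byI summable_real_power_mult_geometric)
                 (auto simp: ad_eq_diff abs_mult power_abs)

lemma dominated_by_sum_power:
  fixes r :: real
  assumes "\<bar>r\<bar> < 1"
  shows "dominated_by (\<lambda>j j'. r ^ (j + j')) (\<lambda>d. \<bar>r\<bar> ^ d)"
  using assms summable_real_power_mult_geometric[of r 0]
  by (intro dominated_byI) (auto simp: power_abs intro!: power_decreasing)

lemma dominated_by_sum_mult_power:
  fixes r :: real
  assumes r: "\<bar>r\<bar> < 1"
  shows "dominated_by (\<lambda>j j'. real (j + j') * r ^ (j + j'))
                      (\<lambda>d. real d * \<bar>r\<bar> ^ d + 2 / (1 - \<bar>r\<bar>^2) * \<bar>r\<bar> ^ d)"
proof (intro dominated_byI)
  define y where "y = \<bar>r\<bar>"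
  have y: "0 \<le> y" "y < 1" and q: "0 \<le> y^2" "y^2 < 1"
    using r by (auto simp: y_def abs_square_less_1)
  show "summable (\<lambda>d. real d * y ^ d + 2 / (1 - y^2) * y ^ d)"
    using summable_real_power_mult_geometric[of y 1] summable_real_power_mult_geometric[of y 0] y
    by (intro summable_add summable_mult) auto
  show "0 \<le> real d * y ^ d + 2 / (1 - y^2) * y ^ d" for d
    using y q by simp
  fix j j' :: nat assume "1 \<le> j" "j \<le> j'"
  then have e: "j + j' = (j' - j) + 2 * j" by simp
  have "\<bar>real (j + j') * r ^ (j + j')\<bar> = real (j + j') * y ^ (j + j')"
    by (simp add: y_def abs_mult power_abs)
  also have "\<dots> = real (j' - j) * y ^ (j' - j) * (y^2) ^ j + 2 * (real j * (y^2) ^ j) * y ^ (j' - j)"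
    unfolding e power_mult[symmetric] by (simp add: power_add algebra_simps)
  also have "\<dots> \<le> real (j' - j) * y ^ (j' - j) * 1 + 2 * (1 / (1 - y^2)) * y ^ (j' - j)"
    using y q by (intro add_mono mult_left_mono mult_right_mono real_mult_power_le power_le_one) auto
  finally show "\<bar>real (j + j') * r ^ (j + j')\<bar> \<le> real (j' - j) * y ^ (j' - j) + 2 / (1 - y^2) * y ^ (j' - j)"
    by simp
qed

lemma sum_offdiag_ad:
  "(\<Sum>j\<in>{1..<j'}. b j * b j' * f (ad j j')) = (\<Sum>j\<in>{1..<j'}. b j * b j' * f (j' - j))"
  by (intro sum.cong) (auto simp: ad_eq_diff)

lemma quad_series_dist_power: "quad_series b (\<lambda>j j'. r ^ ad j j') = betaf b 1 + 2 * b1 b r"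
  unfolding quad_series_def betaf_def b1_def sum_offdiag_ad[where f = "\<lambda>d. r ^ d"] by simp

lemma quad_series_dist_mult_power:
  "quad_series b (\<lambda>j j'. real (ad j j') * r ^ ad j j') = 2 * b1d b r"
  unfolding quad_series_def b1d_def sum_offdiag_ad[where f = "\<lambda>d. real d * r ^ d"]
  by (simp add: mult_ac)

lemma quad_series_dist_sq_mult_power:
  "quad_series b (\<lambda>j j'. real (ad j j')^2 * r ^ ad j j') = 2 * bdd2 b r"
  unfolding quad_series_def bdd2_def sum_offdiag_ad[where f = "\<lambda>d. real d ^ 2 * r ^ d"]
  by (simp add: mult_ac)

lemma quad_series_sum_power: "quad_series b (\<lambda>j j'. r ^ (j + j')) = betaf b (r^2) + 2 * b2 b r"
  unfolding quad_series_def betaf_def b2_def power_add_self by (simp add: add.commute)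

lemma quad_series_sum_mult_power:
  assumes sb: "summable (\<lambda>j. b (Suc j)^2)" and r: "\<bar>r\<bar> < 1"
  shows "quad_series b (\<lambda>j j'. real (j + j') * r ^ (j + j')) = 2 * betaf1 b (r^2) + 2 * b2d b r"
proof -
  have diag: "b (Suc n)^2 * (real (Suc n + Suc n) * r ^ (Suc n + Suc n))
              = 2 * (real (Suc n) * b (Suc n)^2 * (r^2) ^ Suc n)" for n
    by (simp only: power_mult[symmetric] mult_2[symmetric]) (simp add: mult_ac)
  have "summable (\<lambda>n. b (Suc n)^2 * (real (Suc n + Suc n) * r ^ (Suc n + Suc n)))"
    using summable_quad_diag[OF sb dominated_by_sum_mult_power[OF r]] .
  then have "(\<Sum>n. b (Suc n)^2 * (real (Suc n + Suc n) * r ^ (Suc n + Suc n))) = 2 * betaf1 b (r^2)"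
    unfolding diag betaf1_def by (simp add: summable_cmult_iff suminf_mult)
  moreover have "(\<Sum>j\<in>{1..<j'}. b j * b j' * (real (j + j') * r ^ (j + j')))
                 = (\<Sum>j\<in>{1..<j'}. b j * b j' * r ^ (j' + j) * real (j' + j))" for j'
    by (intro sum.cong refl) (simp only: add.commute mult_ac)
  ultimately show ?thesis
    unfolding quad_series_def b2d_def by (simp only:)
qed

section \<open>The limit kernels\<close>

lemma sums_shift_anchors:
  fixes h :: "nat \<Rightarrow> nat \<Rightarrow> real"
  assumes "(\<lambda>k. h (ad (Suc k) 0) (ad (Suc k) d)) sums V"
  shows "(\<lambda>k. h (ad (Suc k) i) (ad (Suc k) (i + d))) sums (V + (\<Sum>t<i. h t (t + d)))"
proof (induction i)
  case (Suc i)
  then have "(\<lambda>k. h (ad k i) (ad k (i + d))) sums (V + (\<Sum>t<i. h t (t + d)) + h i (i + d))"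
    using sums_Suc_iff[of "\<lambda>k. h (ad k i) (ad k (i + d))"] by simp
  then show ?case by (simp add: add.assoc)
qed (use assms in simp)

lemma power_dist_pair_0_sums:
  fixes r :: real
  assumes "\<bar>r\<bar> < 1"
  shows "(\<lambda>k. r ^ Suc k * r ^ ad (Suc k) d) sums (real d * r ^ d + r ^ (d + 2) / (1 - r^2))"
proof -
  define f where "f k = r ^ Suc k * r ^ ad (Suc k) d" for k
  have "(\<lambda>i. r ^ (d + 2) * (r^2) ^ i) sums (r ^ (d + 2) * (1 / (1 - r^2)))"
    using assms by (intro sums_mult geometric_sums) (simp add: abs_square_less_1)
  moreover have "(\<lambda>i. f (i + d)) = (\<lambda>i. r ^ (d + 2) * (r^2) ^ i)"
    by (simp add: f_def ad_def power_add power_add_self[symmetric] mult_ac)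
  ultimately have "f sums (r ^ (d + 2) / (1 - r^2) + (\<Sum>k<d. f k))"
    by (simp add: sums_iff_shift[symmetric])
  moreover have "f k = r ^ d" if "k < d" for k
    using that by (simp add: f_def ad_def power_add[symmetric] del: power_Suc)
  ultimately have "f sums (real d * r ^ d + r ^ (d + 2) / (1 - r^2))"
    by (simp add: add.commute)
  then show ?thesis
    unfolding f_def .
qed

text \<open>The limit kernels are written as combinations of the basic kernels above, so that their
  quadratic series follow by linearity.\<close>

definition kernel2_lim :: "real \<Rightarrow> nat \<Rightarrow> nat \<Rightarrow> real" where
  "kernel2_lim r j j' = real (ad j j') * r ^ ad j j' + (1 + r^2) / (1 - r^2) * r ^ ad j j'
                         - 1 / (1 - r^2) * r ^ (j + j')"

lemma kernel2_lim_sym: "kernel2_lim r j j' = kernel2_lim r j' j"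
  by (simp add: kernel2_lim_def ad_sym add.commute)

lemma sum_power_mult_shifted_power:
  fixes r :: real
  assumes "\<bar>r\<bar> < 1"
  shows "(\<Sum>t<i. r ^ t * r ^ (t + d)) = r ^ d * (1 - (r^2) ^ i) / (1 - r^2)"
proof -
  have "r^2 \<noteq> 1" using one_minus_square_neq_0[OF assms] by simp
  have "(\<Sum>t<i. r ^ t * r ^ (t + d)) = r ^ d * (\<Sum>t<i. (r^2) ^ t)"
    by (simp add: sum_distrib_left power_add power_add_self[symmetric] mult_ac)
  also have "\<dots> = r ^ d * (1 - (r^2) ^ i) / (1 - r^2)"
    using \<open>r^2 \<noteq> 1\<close> by (simp add: sum_gp_strict)
  finally show ?thesis .
qed

lemma kernel2_lim_sums:
  fixes r :: real
  assumes r: "\<bar>r\<bar> < 1"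
  shows "(\<lambda>k. r ^ ad (Suc k) j * r ^ ad (Suc k) j') sums kernel2_lim r j j'"
proof -
  have "(\<lambda>k. r ^ ad (Suc k) i * r ^ ad (Suc k) (i + d)) sums kernel2_lim r i (i + d)" for i d
  proof -
    have "1 - r^2 \<noteq> 0" using r by (rule one_minus_square_neq_0)
    have "(\<lambda>k. r ^ ad (Suc k) i * r ^ ad (Suc k) (i + d))
            sums (real d * r ^ d + r ^ (d + 2) / (1 - r^2) + (\<Sum>t<i. r ^ t * r ^ (t + d)))"
      using sums_shift_anchors[where h = "\<lambda>a b. r ^ a * r ^ b"] power_dist_pair_0_sums[OF r] by simp
    also have "real d * r ^ d + r ^ (d + 2) / (1 - r^2) + (\<Sum>t<i. r ^ t * r ^ (t + d))
               = kernel2_lim r i (i + d)"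
    proof -
      have e: "r ^ (i + (i + d)) = (r^2) ^ i * r ^ d" "r ^ (d + 2) = r ^ d * r^2"
        by (simp_all add: power_add power_mult_distrib power2_eq_square)
      have "D * X + X * q / (1 - q) + X * (1 - Y) / (1 - q)
            = D * X + (1 + q) / (1 - q) * X - 1 / (1 - q) * (Y * X)"
        if "1 - q \<noteq> 0" for D X Y q :: real
        using that by (simp add: field_simps)
      from this[OF \<open>1 - r^2 \<noteq> 0\<close>, of "real d" "r ^ d" "(r^2) ^ i"] show ?thesis
        unfolding sum_power_mult_shifted_power[OF r] kernel2_lim_def ad_eq_diff[OF le_add1] e
          add_diff_cancel_left' .
    qed
    finally show ?thesis .
  qed
  note diag = this
  show ?thesis
  proof (cases "j \<le> j'")
    case True
    then show ?thesis using diag[of j "j' - j"] by simp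
  next
    case False
    then show ?thesis using diag[of j' "j - j'"] by (simp add: kernel2_lim_sym mult.commute)
  qed
qed

lemma sum_real_diff_Suc: "(\<Sum>k<d. real (d - Suc k)) = real d * (real d - 1) / 2"
proof -
  have "(\<Sum>k<d. real (d - Suc k)) = (\<Sum>k<d. real k)"
    by (rule sum.nat_diff_reindex)
  also have "\<dots> = real d * (real d - 1) / 2"
    by (induction d) (auto simp: field_simps)
  finally show ?thesis .
qed

lemma sum_mult_power_times_square:
  fixes x :: real
  shows "(\<Sum>t<i. real t * x ^ t) * (1 - x)^2 = x - real i * x ^ i + (real i - 1) * x ^ Suc i"
  by (induction i) (auto simp: field_simps power2_eq_square)

lemma power_dist_pair_0_weighted_sums:
  fixes r :: real
  assumes "\<bar>r\<bar> < 1"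
  shows "(\<lambda>k. r ^ Suc k * r ^ ad (Suc k) d * real (ad (Suc k) d))
           sums (r ^ d * (real d * (real d - 1) / 2) + r ^ (d + 2) / (1 - r^2)^2)"
proof -
  define f where "f k = r ^ Suc k * r ^ ad (Suc k) d * real (ad (Suc k) d)" for k
  have "(\<lambda>i. r ^ (d + 2) * (real (Suc i) * (r^2) ^ i)) sums (r ^ (d + 2) * (1 / (1 - r^2)^2))"
    using assms by (intro sums_mult geometric_deriv_sums) (simp add: abs_square_less_1)
  moreover have "(\<lambda>i. f (i + d)) = (\<lambda>i. r ^ (d + 2) * (real (Suc i) * (r^2) ^ i))"
    by (simp add: f_def ad_def power_add power_add_self[symmetric] mult_ac)
  ultimately have "f sums (r ^ (d + 2) / (1 - r^2)^2 + (\<Sum>k<d. f k))"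
    by (simp add: sums_iff_shift[symmetric])
  moreover have "(\<Sum>k<d. f k) = (\<Sum>k<d. r ^ d * real (d - Suc k))"
    by (intro sum.cong) (simp_all add: f_def ad_def power_add[symmetric] del: power_Suc)
  ultimately have "f sums (r ^ d * (real d * (real d - 1) / 2) + r ^ (d + 2) / (1 - r^2)^2)"
    by (simp only: sum_distrib_left[symmetric] sum_real_diff_Suc add.commute)
  then show ?thesis
    unfolding f_def .
qed

lemma power_dist_pair_weighted_sums:
  fixes r :: real
  assumes r: "\<bar>r\<bar> < 1"
  shows "(\<lambda>k. r ^ ad (Suc k) i * r ^ ad (Suc k) (i + d) * real (ad (Suc k) (i + d)))
           sums (r ^ d * (real d * (real d - 1) / 2) + r ^ (d + 2) / (1 - r^2)^2
                 + r ^ d * (real d * (1 - (r^2) ^ i) / (1 - r^2)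
                   + (r^2 - real i * (r^2) ^ i + (real i - 1) * (r^2) ^ Suc i) / (1 - r^2)^2))"
proof -
  have "1 - r^2 \<noteq> 0" using r by (rule one_minus_square_neq_0)
  have "(\<Sum>t<i. (r^2) ^ t) = (1 - (r^2) ^ i) / (1 - r^2)"
    using sum_gp_strict[of "r^2" i] \<open>1 - r^2 \<noteq> 0\<close> by simp
  moreover have "(\<Sum>t<i. real t * (r^2) ^ t)
             = (r^2 - real i * (r^2) ^ i + (real i - 1) * (r^2) ^ Suc i) / (1 - r^2)^2"
    using sum_mult_power_times_square[where x = "r^2" and i = i] \<open>1 - r^2 \<noteq> 0\<close>
    by (simp add: eq_divide_eq)
  moreover have "(\<Sum>t<i. r ^ t * r ^ (t + d) * real (t + d))
        = r ^ d * (real d * (\<Sum>t<i. (r^2) ^ t) + (\<Sum>t<i. real t * (r^2) ^ t))"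
    by (simp add: sum_distrib_left sum.distrib power_add power_add_self[symmetric] algebra_simps)
  ultimately have "(\<Sum>t<i. r ^ t * r ^ (t + d) * real (t + d))
        = r ^ d * (real d * (1 - (r^2) ^ i) / (1 - r^2)
                   + (r^2 - real i * (r^2) ^ i + (real i - 1) * (r^2) ^ Suc i) / (1 - r^2)^2)"
    by simp
  moreover have "(\<lambda>k. r ^ ad (Suc k) i * r ^ ad (Suc k) (i + d) * real (ad (Suc k) (i + d)))
      sums (r ^ d * (real d * (real d - 1) / 2) + r ^ (d + 2) / (1 - r^2)^2
            + (\<Sum>t<i. r ^ t * r ^ (t + d) * real (t + d)))"
    using sums_shift_anchors[where h = "\<lambda>a b. r ^ a * r ^ b * real b"] power_dist_pair_0_weighted_sums[OF r]
    by (simp del: of_nat_add)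
  ultimately show ?thesis by simp
qed

definition kernel3_lim :: "real \<Rightarrow> nat \<Rightarrow> nat \<Rightarrow> real" where
  "kernel3_lim r j j' =
     (1 + 4 * r^2 + r^4) / (1 - r^2)^2 * r ^ ad j j'
     + 3 * (1 + r^2) / (2 * (1 - r^2)) * (real (ad j j') * r ^ ad j j')
     + 1 / 2 * (real (ad j j')^2 * r ^ ad j j')
     - (1 + 3 * r^2) / (1 - r^2)^2 * r ^ (j + j')
     - 1 / (1 - r^2) * (real (j + j') * r ^ (j + j'))"

lemma kernel3_lim_decompose:
  fixes r :: real
  assumes r: "\<bar>r\<bar> < 1"
  shows "kernel3_lim r i (i + d)
         = (\<Sum>k. r ^ ad (Suc k) i * r ^ ad (Suc k) (i + d) * real (ad (Suc k) (i + d)))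
           + (1 + r^2) / (1 - r^2) * kernel2_lim r i (i + d)
           - r ^ (i + d) / (1 - r^2) * kernel2_lim r i 0"
proof -
  have alg: "(1 + 4 * q + q^2) / (1 - q)^2 * X + 3 * (1 + q) / (2 * (1 - q)) * (D * X)
         + 1 / 2 * (D^2 * X) - (1 + 3 * q) / (1 - q)^2 * (Y * X)
         - 1 / (1 - q) * ((2 * I + D) * (Y * X))
       = X * (D * (D - 1) / 2) + X * q / (1 - q)^2
         + X * (D * (1 - Y) / (1 - q) + (q - I * Y + (I - 1) * (Y * q)) / (1 - q)^2)
         + (1 + q) / (1 - q) * (D * X + (1 + q) / (1 - q) * X - 1 / (1 - q) * (Y * X))
         - X * Z / (1 - q) * (I * Z + (1 + q) / (1 - q) * Z - 1 / (1 - q) * Z)"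
    if "1 - q \<noteq> 0" "Z * Z = Y" for D I X Y Z q :: real
  proof -
    define u where "u = 1 - q"
    have "u \<noteq> 0" "q = 1 - u" using that(1) by (auto simp: u_def)
    then show ?thesis
      unfolding \<open>q = 1 - u\<close> that(2)[symmetric] by (simp add: field_simps power2_eq_square)
  qed
  have e: "r ^ (d + 2) = r ^ d * r^2" "(r^2) ^ Suc i = (r^2) ^ i * r^2" "r ^ (i + d) = r ^ d * r ^ i"
    "r ^ (i + (i + d)) = (r^2) ^ i * r ^ d"
    by (simp_all add: power_add power_mult_distrib power2_eq_square mult_ac flip: power_Suc2)
  have e4: "r ^ 4 = (r^2)^2" by (simp flip: power_mult)
  have "r ^ i * r ^ i = (r^2) ^ i" by (simp add: power_mult_distrib power2_eq_square)
  from alg[where D = "real d" and I = "real i" and X = "r ^ d" and q = "r^2",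
           OF one_minus_square_neq_0[OF r] this]
  show ?thesis
    unfolding sums_unique[OF power_dist_pair_weighted_sums[OF r], symmetric]
      kernel2_lim_def kernel3_lim_def ad_eq_diff[OF le_add1] add_diff_cancel_left' e e4
    by (simp add: mult_ac)
qed

lemma kernel3_lim_sums:
  fixes r :: real
  assumes r: "\<bar>r\<bar> < 1"
  shows "(\<lambda>k. r ^ ad (Suc k) i * kernel2_lim r (Suc k) (i + d)) sums kernel3_lim r i (i + d)"
proof -
  define c where "c = (1 + r^2) / (1 - r^2)"
  \<comment> \<open>\<open>r\<^bsup>k+j'\<^esup> = r\<^bsup>j'\<^esup> r\<^bsup>|k - 0|\<^esup>\<close>, so the last term of \<open>kernel2_lim\<close> is again a \<open>kernel2_lim\<close> series.\<close>
  have "r ^ ad (Suc k) i * kernel2_lim r (Suc k) (i + d)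
        = r ^ ad (Suc k) i * r ^ ad (Suc k) (i + d) * real (ad (Suc k) (i + d))
          + c * (r ^ ad (Suc k) i * r ^ ad (Suc k) (i + d))
          - r ^ (i + d) / (1 - r^2) * (r ^ ad (Suc k) i * r ^ ad (Suc k) 0)" for k
    by (simp add: kernel2_lim_def c_def power_add algebra_simps)
  moreover have "(\<lambda>k. r ^ ad (Suc k) i * r ^ ad (Suc k) (i + d) * real (ad (Suc k) (i + d))
                      + c * (r ^ ad (Suc k) i * r ^ ad (Suc k) (i + d))
                      - r ^ (i + d) / (1 - r^2) * (r ^ ad (Suc k) i * r ^ ad (Suc k) 0))
                 sums kernel3_lim r i (i + d)"
    unfolding kernel3_lim_decompose[OF r] c_def
    by (intro sums_add sums_diff sums_mult summable_sums kernel2_lim_sums r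
          sums_summable[OF power_dist_pair_weighted_sums[OF r]])
  ultimately show ?thesis by simp
qed

lemma quad_series_kernel2_lim:
  assumes sb: "summable (\<lambda>j. b (Suc j)^2)" and r: "\<bar>r\<bar> < 1"
  shows "quad_series b (kernel2_lim r)
         = betaf b 1 * (1 + r^2) / (1 - r^2) - betaf b (r^2) / (1 - r^2)
           + 2 * (b1d b r + b1 b r * (1 + r^2) / (1 - r^2) - b2 b r / (1 - r^2))"
proof -
  have basis: "dominated (\<lambda>j j'. r ^ ad j j')" "dominated (\<lambda>j j'. real (ad j j') * r ^ ad j j')"
    "dominated (\<lambda>j j'. r ^ (j + j'))"
    using dominated_by_dist_power[OF r, of 0] dominated_by_dist_power[OF r, of 1]
      dominated_by_sum_power[OF r] by (auto intro: dominatedI)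
  have "quad_series b (kernel2_lim r)
        = 2 * b1d b r + (1 + r^2) / (1 - r^2) * (betaf b 1 + 2 * b1 b r)
          - 1 / (1 - r^2) * (betaf b (r^2) + 2 * b2 b r)"
    unfolding kernel2_lim_def
    by (simp only: quad_series_diff[OF sb] quad_series_add[OF sb] quad_series_scale[OF sb]
          dominated_add dominated_diff dominated_scale basis
          quad_series_dist_power quad_series_dist_mult_power quad_series_sum_power)
  also have "\<dots> = betaf b 1 * (1 + r^2) / (1 - r^2) - betaf b (r^2) / (1 - r^2)
                   + 2 * (b1d b r + b1 b r * (1 + r^2) / (1 - r^2) - b2 b r / (1 - r^2))"
  proof -
    define u where "u = 1 - r^2"
    have "u \<noteq> 0" using one_minus_square_neq_0[OF r] by (simp add: u_def)
    moreover have "r^2 = 1 - u" by (simp add: u_def)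
    ultimately show ?thesis
      unfolding u_def[symmetric] by (simp add: field_simps)
  qed
  finally show ?thesis .
qed

lemma quad_series_kernel3_lim:
  assumes sb: "summable (\<lambda>j. b (Suc j)^2)" and r: "\<bar>r\<bar> < 1"
  shows "quad_series b (kernel3_lim r)
         = 1 / (1 - r^2)^2 * ((1 + 4 * r^2 + r^4) * (betaf b 1 + 2 * b1 b r)
                              - (1 + 3 * r^2) * (betaf b (r^2) + 2 * b2 b r))
           + 1 / (1 - r^2) * (3 * b1d b r * (1 + r^2) - 2 * (b2d b r + betaf1 b (r^2)))
           + bdd2 b r"
proof -
  have basis: "dominated (\<lambda>j j'. r ^ ad j j')" "dominated (\<lambda>j j'. real (ad j j') * r ^ ad j j')"
    "dominated (\<lambda>j j'. real (ad j j')^2 * r ^ ad j j')"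
    "dominated (\<lambda>j j'. r ^ (j + j'))" "dominated (\<lambda>j j'. real (j + j') * r ^ (j + j'))"
    using dominated_by_dist_power[OF r, of 0] dominated_by_dist_power[OF r, of 1]
      dominated_by_dist_power[OF r, of 2] dominated_by_sum_power[OF r]
      dominated_by_sum_mult_power[OF r] by (auto intro: dominatedI)
  have "quad_series b (kernel3_lim r)
        = (1 + 4 * r^2 + r^4) / (1 - r^2)^2 * (betaf b 1 + 2 * b1 b r)
          + 3 * (1 + r^2) / (2 * (1 - r^2)) * (2 * b1d b r) + 1 / 2 * (2 * bdd2 b r)
          - (1 + 3 * r^2) / (1 - r^2)^2 * (betaf b (r^2) + 2 * b2 b r)
          - 1 / (1 - r^2) * (2 * betaf1 b (r^2) + 2 * b2d b r)"
    unfolding kernel3_lim_def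
    by (simp only: quad_series_diff[OF sb] quad_series_add[OF sb] quad_series_scale[OF sb]
          dominated_add dominated_diff dominated_scale basis
          quad_series_dist_power quad_series_dist_mult_power quad_series_dist_sq_mult_power
          quad_series_sum_power quad_series_sum_mult_power[OF sb r])
  also have "\<dots> = 1 / (1 - r^2)^2 * ((1 + 4 * r^2 + r^4) * (betaf b 1 + 2 * b1 b r)
                              - (1 + 3 * r^2) * (betaf b (r^2) + 2 * b2 b r))
           + 1 / (1 - r^2) * (3 * b1d b r * (1 + r^2) - 2 * (b2d b r + betaf1 b (r^2)))
           + bdd2 b r"
  proof -
    define u where "u = 1 - r^2"
    have "u \<noteq> 0" using one_minus_square_neq_0[OF r] by (simp add: u_def)
    moreover have "r^2 = 1 - u" "r^4 = (1 - u)^2"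
      by (simp_all add: u_def flip: power_mult)
    ultimately show ?thesis
      unfolding u_def[symmetric] by (simp add: field_simps)
  qed
  finally show ?thesis .
qed

section \<open>Convergence of the kernels\<close>

definition kernel2 :: "real \<Rightarrow> nat \<Rightarrow> nat \<Rightarrow> nat \<Rightarrow> real" where
  "kernel2 r p j j' = (\<Sum>k=1..p. r ^ ad k j * r ^ ad k j')"

definition kernel3 :: "real \<Rightarrow> nat \<Rightarrow> nat \<Rightarrow> nat \<Rightarrow> real" where
  "kernel3 r p j j' = (\<Sum>k=1..p. \<Sum>l=1..p. r ^ ad k j * r ^ ad l j' * r ^ ad k l)"

lemma kernel2_sym: "kernel2 r p j j' = kernel2 r p j' j"
  unfolding kernel2_def by (simp add: mult.commute)

lemma kernel2_eq_partial_sum: "kernel2 r p j j' = (\<Sum>k<p. r ^ ad (Suc k) j * r ^ ad (Suc k) j')"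
  unfolding kernel2_def by (simp add: sum.atLeast1_atMost_eq)

lemma kernel3_eq: "kernel3 r p j j' = (\<Sum>k=1..p. r ^ ad k j * kernel2 r p k j')"
  unfolding kernel3_def kernel2_def sum_distrib_left
  by (intro sum.cong refl) (simp add: ad_sym mult_ac)

lemma kernel3_eq_partial_sum:
  "kernel3 r p j j' = (\<Sum>k<p. r ^ ad (Suc k) j * kernel2 r p (Suc k) j')"
  unfolding kernel3_eq by (simp add: sum.atLeast1_atMost_eq)

lemma kernel3_sym: "kernel3 r p j j' = kernel3 r p j' j"
proof -
  have "kernel3 r p j j' = (\<Sum>l=1..p. \<Sum>k=1..p. r ^ ad k j * r ^ ad l j' * r ^ ad k l)"
    unfolding kernel3_def by (rule sum.swap)
  also have "\<dots> = kernel3 r p j' j"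
    unfolding kernel3_def by (intro sum.cong refl) (simp add: ad_sym mult_ac)
  finally show ?thesis .
qed

lemma kernel2_tendsto: "\<bar>r\<bar> < 1 \<Longrightarrow> (\<lambda>p. kernel2 r p j j') \<longlonglongrightarrow> kernel2_lim r j j'"
  using kernel2_lim_sums[of r j j'] unfolding kernel2_eq_partial_sum sums_def .

lemma kernel2_lim_nonneg: "0 \<le> y \<Longrightarrow> y < 1 \<Longrightarrow> 0 \<le> kernel2_lim y j j'"
  using sums_le[of "\<lambda>_. 0" _ 0, OF _ sums_zero kernel2_lim_sums] by simp

lemma abs_kernel2_le:
  assumes "\<bar>r\<bar> < 1"
  shows "\<bar>kernel2 r p j j'\<bar> \<le> kernel2_lim \<bar>r\<bar> j j'"
proof -
  have S: "(\<lambda>k. \<bar>r\<bar> ^ ad (Suc k) j * \<bar>r\<bar> ^ ad (Suc k) j') sums kernel2_lim \<bar>r\<bar> j j'"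
    using kernel2_lim_sums[of "\<bar>r\<bar>"] assms by simp
  have "\<bar>kernel2 r p j j'\<bar> \<le> (\<Sum>k<p. \<bar>r\<bar> ^ ad (Suc k) j * \<bar>r\<bar> ^ ad (Suc k) j')"
    unfolding kernel2_eq_partial_sum by (rule order_trans[OF sum_abs]) (simp add: abs_mult power_abs)
  also have "\<dots> \<le> kernel2_lim \<bar>r\<bar> j j'"
    unfolding sums_unique[OF S] using S by (intro sum_le_suminf) (auto simp: sums_iff)
  finally show ?thesis .
qed

lemma kernel2_lim_le:
  assumes "0 \<le> y" "y < 1"
  shows "kernel2_lim y j j' \<le> (real (ad j j') + (1 + y^2) / (1 - y^2)) * y ^ ad j j'"
proof -
  have "0 \<le> 1 / (1 - y^2) * y ^ (j + j')"
    using assms by (simp add: abs_square_le_1)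
  then show ?thesis unfolding kernel2_lim_def by (simp add: algebra_simps)
qed

lemma kernel2_lim_bounded:
  assumes "0 \<le> y" "y < 1"
  shows "kernel2_lim y j j' \<le> 1 / (1 - y) + (1 + y^2) / (1 - y^2)"
proof -
  have "0 \<le> (1 + y^2) / (1 - y^2)" using assms by (simp add: abs_square_le_1)
  then have "(real (ad j j') + (1 + y^2) / (1 - y^2)) * y ^ ad j j'
             \<le> 1 / (1 - y) + (1 + y^2) / (1 - y^2) * 1"
    using assms unfolding distrib_right
    by (intro add_mono mult_left_mono real_mult_power_le power_le_one) auto
  then show ?thesis using kernel2_lim_le[OF assms, of j j'] by linarith
qed

lemma dominated_by_kernel2:
  assumes "\<bar>r\<bar> < 1"
  shows "dominated_by (kernel2 r p) (\<lambda>d. (real d + (1 + \<bar>r\<bar>^2) / (1 - \<bar>r\<bar>^2)) * \<bar>r\<bar> ^ d)"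
proof (intro dominated_byI)
  have "0 \<le> (1 + \<bar>r\<bar>^2) / (1 - \<bar>r\<bar>^2)" using assms by (simp add: abs_square_le_1)
  then show "0 \<le> (real d + (1 + \<bar>r\<bar>^2) / (1 - \<bar>r\<bar>^2)) * \<bar>r\<bar> ^ d" for d by simp
  show "summable (\<lambda>d. (real d + (1 + \<bar>r\<bar>^2) / (1 - \<bar>r\<bar>^2)) * \<bar>r\<bar> ^ d)"
    using summable_real_power_mult_geometric[of "\<bar>r\<bar>" 1] summable_real_power_mult_geometric[of "\<bar>r\<bar>" 0] assms
    unfolding distrib_right by (intro summable_add) (auto simp: mult.assoc intro: summable_mult)
  fix j j' :: nat assume "1 \<le> j" "j \<le> j'"
  then have "ad j j' = j' - j" by (simp add: ad_eq_diff)
  show "\<bar>kernel2 r p j j'\<bar> \<le> (real (j' - j) + (1 + \<bar>r\<bar>^2) / (1 - \<bar>r\<bar>^2)) * \<bar>r\<bar> ^ (j' - j)"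
    using order_trans[OF abs_kernel2_le[OF assms, of p j j'] kernel2_lim_le[of "\<bar>r\<bar>" j j']] assms
    unfolding \<open>ad j j' = j' - j\<close> by simp
qed

lemma summable_power_dist:
  fixes y :: real
  assumes "\<bar>y\<bar> < 1"
  shows "summable (\<lambda>k. y ^ ad (Suc k) i)"
proof -
  have "(\<lambda>k. y ^ ad (Suc (k + i)) i) = (\<lambda>k. y * y ^ k)"
    by (simp add: ad_def)
  then have "summable (\<lambda>k. y ^ ad (Suc (k + i)) i)"
    using summable_mult[OF summable_geometric, of y y] assms by simp
  then show ?thesis by (rule summable_iff_shift[THEN iffD1])
qed

lemma kernel3_tendsto:
  assumes r: "\<bar>r\<bar> < 1" and "j \<le> j'"
  shows "(\<lambda>p. kernel3 r p j j') \<longlonglongrightarrow> kernel3_lim r j j'"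
proof -
  define a where "a k p = (if k < p then r ^ ad (Suc k) j * kernel2 r p (Suc k) j' else 0)" for k p
  define g where "g k = r ^ ad (Suc k) j * kernel2_lim r (Suc k) j'" for k
  define C where "C = 1 / (1 - \<bar>r\<bar>) + (1 + \<bar>r\<bar>^2) / (1 - \<bar>r\<bar>^2)"
  define M where "M k = \<bar>r\<bar> ^ ad (Suc k) j * C" for k
  have "(\<lambda>p. a k p) \<longlonglongrightarrow> g k" for k
  proof (rule Lim_transform_eventually)
    show "(\<lambda>p. r ^ ad (Suc k) j * kernel2 r p (Suc k) j') \<longlonglongrightarrow> g k"
      unfolding g_def by (intro tendsto_mult tendsto_const kernel2_tendsto r)
    show "\<forall>\<^sub>F p in sequentially. r ^ ad (Suc k) j * kernel2 r p (Suc k) j' = a k p"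
      unfolding a_def using eventually_gt_at_top[of k] by eventually_elim simp
  qed
  moreover have "norm (a k p) \<le> M k" for k p
  proof -
    have "\<bar>kernel2 r p (Suc k) j'\<bar> \<le> C"
      unfolding C_def using abs_kernel2_le[OF r] kernel2_lim_bounded[of "\<bar>r\<bar>"] r
      by (meson abs_ge_zero order_trans)
    then show ?thesis unfolding a_def M_def by (auto simp: abs_mult power_abs intro: mult_left_mono)
  qed
  moreover have "summable M"
    unfolding M_def using r by (intro summable_mult2 summable_power_dist) simp
  ultimately have "(\<lambda>p. \<Sum>k. a k p) \<longlonglongrightarrow> (\<Sum>k. g k)"
    using tannerys_theorem[of a g sequentially M] by (auto intro: always_eventually)
  moreover have "(\<Sum>k. a k p) = kernel3 r p j j'" for p
    by (subst suminf_finite[of "{..<p}"]) (auto simp: a_def kernel3_eq_partial_sum)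
  moreover have "(\<Sum>k. g k) = kernel3_lim r j j'"
    using kernel3_lim_sums[OF r, of j "j' - j"] \<open>j \<le> j'\<close> by (simp add: g_def sums_iff)
  ultimately show ?thesis by simp
qed

lemma abs_kernel3_le:
  assumes r: "\<bar>r\<bar> < 1" and "j \<le> j'"
  shows "\<bar>kernel3 r p j j'\<bar> \<le> kernel3_lim \<bar>r\<bar> j j'"
proof -
  have S: "(\<lambda>k. \<bar>r\<bar> ^ ad (Suc k) j * kernel2_lim \<bar>r\<bar> (Suc k) j') sums kernel3_lim \<bar>r\<bar> j j'"
    using kernel3_lim_sums[of "\<bar>r\<bar>" j "j' - j"] r \<open>j \<le> j'\<close> by simp
  have "\<bar>kernel3 r p j j'\<bar> \<le> (\<Sum>k<p. \<bar>r\<bar> ^ ad (Suc k) j * kernel2_lim \<bar>r\<bar> (Suc k) j')"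
    unfolding kernel3_eq_partial_sum
    by (rule order_trans[OF sum_abs], rule sum_mono)
       (simp add: abs_mult power_abs mult_left_mono abs_kernel2_le[OF r])
  also have "\<dots> \<le> kernel3_lim \<bar>r\<bar> j j'"
    unfolding sums_unique[OF S] using S r
    by (intro sum_le_suminf) (auto simp: sums_iff intro!: mult_nonneg_nonneg kernel2_lim_nonneg)
  finally show ?thesis .
qed

lemma kernel3_lim_le:
  assumes "0 \<le> y" "y < 1"
  shows "kernel3_lim y j j'
         \<le> ((1 + 4 * y^2 + y^4) / (1 - y^2)^2 + 3 * (1 + y^2) / (2 * (1 - y^2)) * real (ad j j')
            + real (ad j j')^2 / 2) * y ^ ad j j'"
proof -
  have "0 < 1 - y^2" using assms by (simp add: abs_square_less_1)
  then have "0 \<le> (1 + 3 * y^2) / (1 - y^2)^2 * y ^ (j + j')"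
    "0 \<le> 1 / (1 - y^2) * (real (j + j') * y ^ (j + j'))"
    using assms by simp_all
  then show ?thesis unfolding kernel3_lim_def by (simp add: algebra_simps)
qed

lemma dominated_by_kernel3:
  assumes r: "\<bar>r\<bar> < 1"
  defines "y \<equiv> \<bar>r\<bar>"
  shows "dominated_by (\<lambda>j j'. kernel3 r p j j')
           (\<lambda>d. ((1 + 4 * y^2 + y^4) / (1 - y^2)^2 + 3 * (1 + y^2) / (2 * (1 - y^2)) * real d
                 + real d^2 / 2) * y ^ d)"
proof (intro dominated_byI)
  have y: "0 \<le> y" "y < 1" "0 < 1 - y^2" using r by (auto simp: y_def abs_square_less_1)
  show "summable (\<lambda>d. ((1 + 4 * y^2 + y^4) / (1 - y^2)^2 + 3 * (1 + y^2) / (2 * (1 - y^2)) * real d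
                        + real d^2 / 2) * y ^ d)"
    using summable_real_power_mult_geometric[of y 0] summable_real_power_mult_geometric[of y 1]
      summable_real_power_mult_geometric[of y 2] y
    unfolding distrib_right
    by (intro summable_add) (auto simp: mult.assoc intro: summable_mult)
  show "0 \<le> ((1 + 4 * y^2 + y^4) / (1 - y^2)^2 + 3 * (1 + y^2) / (2 * (1 - y^2)) * real d
              + real d^2 / 2) * y ^ d" for d
    using y by (intro mult_nonneg_nonneg add_nonneg_nonneg) auto
  fix j j' :: nat assume "1 \<le> j" "j \<le> j'"
  then show "\<bar>kernel3 r p j j'\<bar> \<le> ((1 + 4 * y^2 + y^4) / (1 - y^2)^2
              + 3 * (1 + y^2) / (2 * (1 - y^2)) * real (j' - j) + real (j' - j)^2 / 2) * y ^ (j' - j)"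
    using order_trans[OF abs_kernel3_le[OF r \<open>j \<le> j'\<close>, of p, folded y_def] kernel3_lim_le[OF y(1,2)]]
    by (simp add: ad_eq_diff del: of_nat_diff)
qed

section \<open>The limits of the quadratic forms\<close>

lemma kappa2_eq_quadratic_form:
  "kappa2 b r p = (\<Sum>j=1..p. \<Sum>j'=1..p. b j * b j' * kernel2 r p j j')"
proof -
  have "kappa2 b r p = (\<Sum>k=1..p. \<Sum>j=1..p. \<Sum>j'=1..p. (b j * r ^ ad k j) * (b j' * r ^ ad k j'))"
    unfolding kappa2_def power2_eq_square sum_product ..
  also have "\<dots> = (\<Sum>j=1..p. \<Sum>k=1..p. \<Sum>j'=1..p. (b j * r ^ ad k j) * (b j' * r ^ ad k j'))"
    by (rule sum.swap)
  also have "\<dots> = (\<Sum>j=1..p. \<Sum>j'=1..p. \<Sum>k=1..p. (b j * r ^ ad k j) * (b j' * r ^ ad k j'))"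
    by (intro sum.cong refl sum.swap)
  also have "\<dots> = (\<Sum>j=1..p. \<Sum>j'=1..p. b j * b j' * kernel2 r p j j')"
    unfolding kernel2_def sum_distrib_left by (simp add: mult_ac)
  finally show ?thesis .
qed

lemma kappa3_eq_quadratic_form:
  "kappa3 b r p = (\<Sum>j=1..p. \<Sum>j'=1..p. b j * b j' * kernel3 r p j j')"
proof -
  let ?f = "\<lambda>k l j j'. b j * b j' * r ^ ad k j * r ^ ad l j' * r ^ ad k l"
  have "kappa3 b r p = (\<Sum>k=1..p. \<Sum>l=1..p. \<Sum>j=1..p. \<Sum>j'=1..p. ?f k l j j')"
    unfolding kappa3_def by (simp add: mult_ac)
  also have "\<dots> = (\<Sum>k=1..p. \<Sum>j=1..p. \<Sum>l=1..p. \<Sum>j'=1..p. ?f k l j j')"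
    by (intro sum.cong refl sum.swap)
  also have "\<dots> = (\<Sum>j=1..p. \<Sum>k=1..p. \<Sum>j'=1..p. \<Sum>l=1..p. ?f k l j j')"
    by (subst sum.swap) (intro sum.cong refl sum.swap)
  also have "\<dots> = (\<Sum>j=1..p. \<Sum>j'=1..p. \<Sum>k=1..p. \<Sum>l=1..p. ?f k l j j')"
    by (intro sum.cong refl sum.swap)
  also have "\<dots> = (\<Sum>j=1..p. \<Sum>j'=1..p. b j * b j' * kernel3 r p j j')"
    unfolding kernel3_def sum_distrib_left by (simp add: mult_ac)
  finally show ?thesis .
qed

lemma kappa1_tendsto:
  assumes sb: "summable (\<lambda>j. b (Suc j)^2)" and r: "\<bar>r\<bar> < 1"
  shows "kappa1 b r \<longlonglongrightarrow> betaf b 1 + 2 * b1 b r"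
proof -
  have "(\<lambda>p. \<Sum>j=1..p. \<Sum>j'=1..p. b j * b j' * r ^ ad j j') \<longlonglongrightarrow> quad_series b (\<lambda>j j'. r ^ ad j j')"
    using dominated_by_dist_power[OF r, of 0]
    by (intro quadratic_form_tendsto[OF sb]) (simp_all add: ad_sym)
  then show ?thesis
    unfolding quad_series_dist_power by (simp add: kappa1_def[abs_def])
qed

lemma kappa2_tendsto:
  assumes sb: "summable (\<lambda>j. b (Suc j)^2)" and r: "\<bar>r\<bar> < 1"
  shows "kappa2 b r \<longlonglongrightarrow> quad_series b (kernel2_lim r)"
  unfolding kappa2_eq_quadratic_form[abs_def]
  by (rule quadratic_form_tendsto[OF sb kernel2_sym kernel2_tendsto[OF r] dominated_by_kernel2[OF r]])

lemma kappa3_tendsto: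
  assumes sb: "summable (\<lambda>j. b (Suc j)^2)" and r: "\<bar>r\<bar> < 1"
  shows "kappa3 b r \<longlonglongrightarrow> quad_series b (kernel3_lim r)"
  unfolding kappa3_eq_quadratic_form[abs_def]
  by (rule quadratic_form_tendsto[OF sb kernel3_sym kernel3_tendsto[OF r] dominated_by_kernel3[OF r]])

theorem mainTheorem8:
  fixes b :: "nat \<Rightarrow> real" and r :: real
  assumes "summable (\<lambda>j. b (Suc j)^2)" and "\<bar>r\<bar> < 1"
  shows "(kappa1 b r \<longlongrightarrow> betaf b 1 + 2 * b1 b r) sequentially \<and>
         (kappa2 b r \<longlongrightarrow>
           betaf b 1 * (1 + r^2) / (1 - r^2) - betaf b (r^2) / (1 - r^2)
           + 2 * (b1d b r + b1 b r * (1 + r^2) / (1 - r^2) - b2 b r / (1 - r^2))) sequentially \<and>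
         (kappa3 b r \<longlongrightarrow>
           1 / (1 - r^2)^2 * ((1 + 4 * r^2 + r^4) * (betaf b 1 + 2 * b1 b r)
                              - (1 + 3 * r^2) * (betaf b (r^2) + 2 * b2 b r))
           + 1 / (1 - r^2) * (3 * b1d b r * (1 + r^2) - 2 * (b2d b r + betaf1 b (r^2)))
           + bdd2 b r) sequentially"
  using kappa1_tendsto[OF assms] kappa2_tendsto[OF assms] kappa3_tendsto[OF assms]
  unfolding quad_series_kernel2_lim[OF assms] quad_series_kernel3_lim[OF assms]
  by blast

end
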